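(* Let $\mathtt{L}$ be a line of $\mathcal{S}$ and $\theta$ a point of $\mathcal{S}$. If $\theta$ has distance $3$ from two points of $\mathtt{L}$, then $\theta$ has distance $2$ from the third point of $\mathtt{L}$.
   Context: Let $S=(P,L)$ and $S'=(P',L')$ be generalized quadrangles of order $(2,2)$ (every line has 3 points, every point lies on 3 lines, and for each point $x$ and line $l\not\ni x$ exactly one point of $l$ is collinear with $x$), with an isomorphism $x\mapsto x'$ from $S$ to $S'$. In a point-line geometry, $x^{\perp}$ is $x$ together with all points collinear with $x$, and $A^{\perp}=\bigcap_{a\in A}a^{\perp}$. A triad is a set of three pairwise non-collinear points, complete if $|T^{\perp}|=3$. The geometry $\mathcal{S}=(\mathcal{P},\mathcal{L})$ has point set $\mathcal{P}=\{(x,y')\in P\times P':y'\in x'^{\perp}\}$ and lines all $3$-subsets $\{(x,u'),(y,v'),(z,w')\}$ of $\mathcal{P}$ where $T=\{x,y,z\}$ (three distinct points) is a line or a complete triad of $S$ and $\{u',v',w'\}=T'^{\perp}$ in $S'$ with $u',v',w'$ distinct. Distance is measured in the collinearity graph of $\mathcal{S}$. *)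

theory Defs
  imports Main
begin

definition collinear :: "'p set set \<Rightarrow> 'p \<Rightarrow> 'p \<Rightarrow> bool" where
  "collinear L x y \<longleftrightarrow> x \<noteq> y \<and> (\<exists>l\<in>L. x \<in> l \<and> y \<in> l)"

definition perp :: "'p set \<Rightarrow> 'p set set \<Rightarrow> 'p \<Rightarrow> 'p set" where
  "perp P L x = {y \<in> P. y = x \<or> collinear L x y}"

definition setperp :: "'p set \<Rightarrow> 'p set set \<Rightarrow> 'p set \<Rightarrow> 'p set" where
  "setperp P L A = {y \<in> P. \<forall>a\<in>A. y \<in> perp P L a}"

definition GQ22 :: "'p set \<Rightarrow> 'p set set \<Rightarrow> bool" where
  "GQ22 P L \<longleftrightarrow>
     (\<forall>l\<in>L. l \<subseteq> P \<and> card l = 3) \<and>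
     (\<forall>x\<in>P. card {l\<in>L. x \<in> l} = 3) \<and>
     (\<forall>x\<in>P. \<forall>l\<in>L. x \<notin> l \<longrightarrow> (\<exists>!y. y \<in> l \<and> collinear L x y))"

definition geom_iso :: "('a \<Rightarrow> 'b) \<Rightarrow> 'a set \<Rightarrow> 'a set set \<Rightarrow> 'b set \<Rightarrow> 'b set set \<Rightarrow> bool" where
  "geom_iso f P L P' L' \<longleftrightarrow> bij_betw f P P' \<and> (\<lambda>l. f ` l) ` L = L'"

definition triad :: "'p set \<Rightarrow> 'p set set \<Rightarrow> 'p set \<Rightarrow> bool" where
  "triad P L T \<longleftrightarrow> T \<subseteq> P \<and> card T = 3 \<and>
     (\<forall>x\<in>T. \<forall>y\<in>T. x \<noteq> y \<longrightarrow> \<not> collinear L x y)"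

definition complete_triad :: "'p set \<Rightarrow> 'p set set \<Rightarrow> 'p set \<Rightarrow> bool" where
  "complete_triad P L T \<longleftrightarrow> triad P L T \<and> card (setperp P L T) = 3"

definition SPts :: "('a \<Rightarrow> 'b) \<Rightarrow> 'a set \<Rightarrow> 'b set \<Rightarrow> 'b set set \<Rightarrow> ('a \<times> 'b) set" where
  "SPts f P P' L' = {(x, y). x \<in> P \<and> y \<in> perp P' L' (f x)}"

definition SLines :: "('a \<Rightarrow> 'b) \<Rightarrow> 'a set \<Rightarrow> 'a set set \<Rightarrow> 'b set \<Rightarrow> 'b set set
    \<Rightarrow> ('a \<times> 'b) set set" where
  "SLines f P L P' L' =
    {{(x, u), (y, v), (z, w)} | x y z u v w.
       x \<noteq> y \<and> x \<noteq> z \<and> y \<noteq> z \<and>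
       ({x, y, z} \<in> L \<or> complete_triad P L {x, y, z}) \<and>
       u \<noteq> v \<and> u \<noteq> w \<and> v \<noteq> w \<and>
       {u, v, w} = setperp P' L' (f ` {x, y, z}) \<and>
       {(x, u), (y, v), (z, w)} \<subseteq> SPts f P P' L'}"

definition adj :: "'p set \<Rightarrow> 'p set set \<Rightarrow> ('p \<times> 'p) set" where
  "adj P L = {(x, y). x \<in> P \<and> y \<in> P \<and> collinear L x y}"

definition has_dist :: "('p \<times> 'p) set \<Rightarrow> 'p \<Rightarrow> 'p \<Rightarrow> nat \<Rightarrow> bool" where
  "has_dist A a b n \<longleftrightarrow> (a, b) \<in> A ^^ n \<and> (\<forall>k<n. (a, b) \<notin> A ^^ k)"

end

theory Submission
  imports Defs
begin

(* Read the first coordinate of a point of \<S> in S' via the isomorphism, and write x^perp for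
   perp and setperp. Two points (A, alpha) and (C, gamma) with A \<noteq> C, alpha \<noteq> gamma,
   alpha \<in> C^perp and gamma \<in> A^perp are adjacent in \<S>: every point of GQ(2,2) is regular, so
   A and C lie in a line or a complete triad {A, C, E} with {A, C, E}^perp = {A, C}^perp, and
   this set of three points carries a line of \<S> through both.

   Every point (A, alpha) is at distance at most 2 from some point of every line
   {(X, u), (Y, v), (Z, w)} of \<S>, where {u, v, w} = {X, Y, Z}^perp. If A is one of X, Y, Z (or
   alpha one of u, v, w), a path of length 2 passes through a point of the three-element set
   {alpha, u}^perp (or {A, X}^perp). Otherwise alpha \<in> C^perp for some C \<in> {X, Y, Z} and
   gamma \<in> A^perp for some gamma \<in> {u, v, w}: for a complete triad because a point
   perpendicular to no point of the 3 x 3 grid {X, Y, Z} \<union> {u, v, w} would be collinear with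
   nine points, while it has only six neighbours. Then (A, alpha), (C, gamma) and the point of
   the line whose coordinates avoid C and gamma form a path.

   As the third point r of the line is adjacent to p, which is at distance 3 from theta, r is
   at distance exactly 2. *)

lemma collinear_commute: "collinear L x y \<longleftrightarrow> collinear L y x"
  unfolding collinear_def by blast

lemma line_collinear: "l \<in> L \<Longrightarrow> x \<in> l \<Longrightarrow> y \<in> l \<Longrightarrow> x \<noteq> y \<Longrightarrow> collinear L x y"
  unfolding collinear_def by blast

lemma mem_perp: "y \<in> perp P L x \<longleftrightarrow> y \<in> P \<and> (y = x \<or> collinear L x y)"
  unfolding perp_def by blast

lemma mem_setperp: "y \<in> setperp P L A \<longleftrightarrow> y \<in> P \<and> (\<forall>a\<in>A. y \<in> perp P L a)"
  unfolding setperp_def by blast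

lemma mem_setperp_pair: "y \<in> setperp P L {a, b} \<longleftrightarrow> y \<in> perp P L a \<and> y \<in> perp P L b"
  unfolding setperp_def perp_def by blast

lemma setperp_antimono: "A \<subseteq> B \<Longrightarrow> setperp P L B \<subseteq> setperp P L A"
  unfolding setperp_def by blast

abbreviation coclique :: "'p set set \<Rightarrow> 'p set \<Rightarrow> bool" where
  "coclique L S \<equiv> pairwise (\<lambda>p q. \<not> collinear L p q) S"

lemma triad_iff: "triad P L T \<longleftrightarrow> T \<subseteq> P \<and> card T = 3 \<and> coclique L T"
  unfolding triad_def pairwise_def by blast

lemma card_3_ex_avoid: "card S = 3 \<Longrightarrow> \<exists>c\<in>S. c \<noteq> a \<and> c \<noteq> b"
  by (auto simp: card_3_iff)

lemma relpow_2_I: "(x, y) \<in> R \<Longrightarrow> (y, z) \<in> R \<Longrightarrow> (x, z) \<in> R ^^ 2"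
  by (auto simp: numeral_2_eq_2 intro: relpow_Suc_I)

lemma relpow_image:
  assumes "\<And>x y. (x, y) \<in> R \<Longrightarrow> (g x, g y) \<in> S" and "(x, y) \<in> R ^^ n"
  shows "(g x, g y) \<in> S ^^ n"
  using assms(2) by (induction n arbitrary: y) (auto elim!: relpow_Suc_E intro: relpow_Suc_I assms(1))

lemma has_dist_of_neighbour:
  assumes "(a, r) \<in> R ^^ k" "k \<le> n" "(r, p) \<in> R" "has_dist R a p (Suc n)"
  shows "has_dist R a r n"
proof -
  have closer: "(a, r) \<notin> R ^^ j" if "j < n" for j
  proof
    assume "(a, r) \<in> R ^^ j"
    then have "(a, p) \<in> R ^^ Suc j" using assms(3) by (rule relpow_Suc_I)
    moreover have "Suc j < Suc n" using that by simp
    ultimately show False using assms(4) unfolding has_dist_def by blast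
  qed
  then have "k = n" using assms(1,2) by (meson le_neq_implies_less)
  then show ?thesis using assms(1) closer unfolding has_dist_def by blast
qed

section \<open>Generalized quadrangles of order (2,2)\<close>

locale gq22 =
  fixes P :: "'p set" and L :: "'p set set"
  assumes GQ22: "GQ22 P L"
begin

lemma GQ22_axioms:
  shows "\<forall>l\<in>L. l \<subseteq> P \<and> card l = 3"
    and "\<forall>x\<in>P. card {l \<in> L. x \<in> l} = 3"
    and "\<forall>x\<in>P. \<forall>l\<in>L. x \<notin> l \<longrightarrow> (\<exists>!y. y \<in> l \<and> collinear L x y)"
  using GQ22 unfolding GQ22_def by simp_all

lemma line_subset: "l \<in> L \<Longrightarrow> l \<subseteq> P"
  using GQ22_axioms(1) by blast

lemma card_line: "l \<in> L \<Longrightarrow> card l = 3"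
  using GQ22_axioms(1) by blast

lemma card_lines_through: "x \<in> P \<Longrightarrow> card {l \<in> L. x \<in> l} = 3"
  using GQ22_axioms(2) by blast

lemma ex1_collinear_on_line: "x \<in> P \<Longrightarrow> l \<in> L \<Longrightarrow> x \<notin> l \<Longrightarrow> \<exists>!y. y \<in> l \<and> collinear L x y"
  using GQ22_axioms(3) by blast

lemma finite_line: "l \<in> L \<Longrightarrow> finite l"
  by (rule card_ge_0_finite) (simp add: card_line)

lemma finite_lines_through: "x \<in> P \<Longrightarrow> finite {l \<in> L. x \<in> l}"
  by (rule card_ge_0_finite) (simp add: card_lines_through)

lemma collinear_in_points: "collinear L x y \<Longrightarrow> x \<in> P \<and> y \<in> P"
  unfolding collinear_def using line_subset by blast

lemma collinear_imp_perp: "collinear L x y \<Longrightarrow> y \<in> perp P L x"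
  using collinear_in_points by (simp add: mem_perp)

lemma perp_refl: "x \<in> P \<Longrightarrow> x \<in> perp P L x"
  by (simp add: mem_perp)

lemma perp_in_points: "y \<in> perp P L x \<Longrightarrow> x \<in> P \<and> y \<in> P"
  using collinear_in_points by (auto simp: mem_perp)

lemma perp_sym: "y \<in> perp P L x \<Longrightarrow> x \<in> perp P L y"
  using perp_in_points collinear_commute by (metis mem_perp)

lemma line_perp: "l \<in> L \<Longrightarrow> x \<in> l \<Longrightarrow> y \<in> l \<Longrightarrow> y \<in> perp P L x"
  using line_collinear line_subset by (fastforce simp: mem_perp)

lemma collinear_on_line_unique:
  "l \<in> L \<Longrightarrow> x \<notin> l \<Longrightarrow> a \<in> l \<Longrightarrow> b \<in> l \<Longrightarrow> collinear L x a \<Longrightarrow> collinear L x b \<Longrightarrow> a = b"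
  using ex1_collinear_on_line collinear_in_points by metis

lemma exists_collinear_on_line: "x \<in> P \<Longrightarrow> l \<in> L \<Longrightarrow> x \<notin> l \<Longrightarrow> \<exists>y\<in>l. collinear L x y"
  using ex1_collinear_on_line by blast

lemma line_unique:
  assumes "l \<in> L" "l' \<in> L" "x \<in> l" "y \<in> l" "x \<in> l'" "y \<in> l'" "x \<noteq> y"
  shows "l = l'"
proof (rule ccontr)
  assume "l \<noteq> l'"
  then have "\<not> l' \<subseteq> l"
    using card_subset_eq[OF finite_line] card_line assms(1,2) by metis
  then obtain z where z: "z \<in> l'" "z \<notin> l" by blast
  then have "collinear L z x" "collinear L z y"
    using line_collinear assms(2-7) by metis+
  then show False using collinear_on_line_unique z(2) assms(1,3,4,7) by blast
qed

lemma card_coclique_neighbours_le: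
  assumes "z \<in> P" "S \<subseteq> {q. collinear L z q}" "coclique L S"
  shows "card S \<le> 3"
proof -
  define line_to where "line_to q = (SOME l. l \<in> L \<and> z \<in> l \<and> q \<in> l)" for q
  have line_to: "line_to q \<in> {l \<in> L. z \<in> l} \<and> q \<in> line_to q" if "q \<in> S" for q
  proof -
    have "\<exists>l. l \<in> L \<and> z \<in> l \<and> q \<in> l" using that assms(2) unfolding collinear_def by blast
    then show ?thesis unfolding line_to_def by (rule someI2_ex) blast
  qed
  have "inj_on line_to S"
  proof (rule inj_onI, rule ccontr)
    fix p q assume pq: "p \<in> S" "q \<in> S" "line_to p = line_to q" "p \<noteq> q"
    then have "collinear L p q"
      using line_to line_collinear by (metis mem_Collect_eq)
    then show False using pairwiseD[OF assms(3)] pq by blast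
  qed
  then have "card S \<le> card {l \<in> L. z \<in> l}"
    by (rule card_inj_on_le) (use line_to finite_lines_through assms(1) in auto)
  then show ?thesis using card_lines_through assms(1) by simp
qed

lemma finite_card_collinear_le:
  assumes "x \<in> P"
  shows "finite {y. collinear L x y}" and "card {y. collinear L x y} \<le> 6"
proof -
  have eq: "{y. collinear L x y} = (\<Union>l\<in>{l \<in> L. x \<in> l}. l - {x})"
    unfolding collinear_def by blast
  show "finite {y. collinear L x y}"
    unfolding eq using finite_lines_through[OF assms] finite_line by blast
  have "card (\<Union>l\<in>{l \<in> L. x \<in> l}. l - {x}) \<le> (\<Sum>l\<in>{l \<in> L. x \<in> l}. card (l - {x}))"
    by (rule card_UN_le) (rule finite_lines_through[OF assms])
  also have "\<dots> = (\<Sum>l\<in>{l \<in> L. x \<in> l}. 2)"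
    by (rule sum.cong) (simp_all add: card_line finite_line)
  also have "\<dots> = 6"
    using card_lines_through[OF assms] by simp
  finally show "card {y. collinear L x y} \<le> 6" unfolding eq .
qed

lemma setperp_line_pair:
  assumes "l \<in> L" "x \<in> l" "y \<in> l" "x \<noteq> y"
  shows "setperp P L {x, y} = l"
proof
  show "l \<subseteq> setperp P L {x, y}"
    using line_perp assms by (auto simp: mem_setperp_pair)
  show "setperp P L {x, y} \<subseteq> l"
  proof
    fix q assume q: "q \<in> setperp P L {x, y}"
    show "q \<in> l"
    proof (rule ccontr)
      assume "q \<notin> l"
      then have "q \<noteq> x" "q \<noteq> y" using assms(2,3) by auto
      then have "collinear L q x" "collinear L q y"
        using q by (auto simp: mem_setperp_pair mem_perp collinear_commute[of L _ q])
      then show False using collinear_on_line_unique \<open>q \<notin> l\<close> assms by blast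
    qed
  qed
qed

lemma setperp_line:
  assumes "l \<in> L"
  shows "setperp P L l = l"
proof
  obtain x y z where l: "l = {x, y, z}" "x \<noteq> y"
    using card_line[OF assms] card_3_iff by metis
  have "setperp P L l \<subseteq> setperp P L {x, y}"
    using l by (intro setperp_antimono) blast
  also have "\<dots> = l"
    using setperp_line_pair[OF assms] l by blast
  finally show "setperp P L l \<subseteq> l" .
  show "l \<subseteq> setperp P L l"
    using line_perp[OF assms] line_subset[OF assms] by (auto simp: mem_setperp)
qed

lemma noncollinear_common_neighbours:
  assumes "x \<noteq> y" "\<not> collinear L x y" "collinear L x p" "collinear L y p"
    "collinear L x q" "collinear L y q" "p \<noteq> q"
  shows "\<not> collinear L p q"
proof
  assume "collinear L p q"
  then obtain l where l: "l \<in> L" "p \<in> l" "q \<in> l" unfolding collinear_def by blast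
  have "x \<in> l"
    using collinear_on_line_unique[OF l(1) _ l(2,3) assms(3,5)] assms(7) by blast
  moreover have "y \<in> l"
    using collinear_on_line_unique[OF l(1) _ l(2,3) assms(4,6)] assms(7) by blast
  ultimately show False using line_collinear[OF l(1) _ _ assms(1)] assms(2) by blast
qed

lemma setperp_noncollinear_pair_collinear:
  assumes "x \<noteq> y" "\<not> collinear L x y" "q \<in> setperp P L {x, y}"
  shows "collinear L x q" "collinear L y q"
proof -
  have "q \<in> perp P L x" "q \<in> perp P L y"
    using assms(3) by (simp_all add: mem_setperp_pair)
  moreover have "\<not> collinear L y x"
    using assms(2) collinear_commute by metis
  ultimately show "collinear L x q" "collinear L y q"
    using assms(1,2) by (auto simp: mem_perp)
qed

lemma coclique_setperp_noncollinear_pair: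
  assumes "x \<noteq> y" "\<not> collinear L x y"
  shows "coclique L (setperp P L {x, y})"
  using noncollinear_common_neighbours[OF assms] setperp_noncollinear_pair_collinear[OF assms]
  unfolding pairwise_def by blast

lemma card_lines_through_le_card_setperp:
  assumes "x \<in> P" "y \<in> P" "x \<noteq> y" "\<not> collinear L x y" "finite (setperp P L {x, y})"
  shows "card {l \<in> L. x \<in> l} \<le> card (setperp P L {x, y})"
proof -
  let ?Lx = "{l \<in> L. x \<in> l}"
  define proj where "proj l = (SOME q. q \<in> l \<and> collinear L y q)" for l
  have proj: "proj l \<in> l \<and> collinear L y (proj l)" if "l \<in> ?Lx" for l
  proof -
    have "y \<notin> l"
      using line_collinear[of l L x y] that assms(3,4) by blast
    then have "\<exists>q. q \<in> l \<and> collinear L y q"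
      using exists_collinear_on_line[OF assms(2)] that by blast
    then show ?thesis
      unfolding proj_def by (rule someI_ex)
  qed
  have proj_ne: "proj l \<noteq> x" if "l \<in> ?Lx" for l
    using proj[OF that] assms(4) collinear_commute[of L x y] by auto
  have "proj l \<in> setperp P L {x, y}" if "l \<in> ?Lx" for l
    using proj[OF that] line_perp[of l x "proj l"] collinear_imp_perp[of y "proj l"] that
    by (simp add: mem_setperp_pair)
  then have "proj ` ?Lx \<subseteq> setperp P L {x, y}" by blast
  moreover have "inj_on proj ?Lx"
  proof (rule inj_onI)
    fix l l' assume l: "l \<in> ?Lx" "l' \<in> ?Lx" "proj l = proj l'"
    then have "proj l \<in> l" "proj l \<in> l'" "proj l \<noteq> x"
      using proj proj_ne by metis+
    then show "l = l'"
      using line_unique[of l l' x "proj l"] l by simp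
  qed
  ultimately show ?thesis
    using card_inj_on_le[OF _ _ assms(5)] by blast
qed

lemma card_setperp_noncollinear_pair:
  assumes "x \<in> P" "y \<in> P" "x \<noteq> y" "\<not> collinear L x y"
  shows "card (setperp P L {x, y}) = 3"
proof -
  have sub: "setperp P L {x, y} \<subseteq> {q. collinear L x q}"
    using setperp_noncollinear_pair_collinear(1)[OF assms(3,4)] by blast
  have "card (setperp P L {x, y}) \<le> 3"
    using card_coclique_neighbours_le[OF assms(1) sub]
      coclique_setperp_noncollinear_pair[OF assms(3,4)] .
  moreover have "finite (setperp P L {x, y})"
    using finite_subset[OF sub finite_card_collinear_le(1)[OF assms(1)]] .
  ultimately show ?thesis
    using card_lines_through_le_card_setperp[OF assms] card_lines_through[OF assms(1)] by simp
qed

lemma card_setperp_pair: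
  assumes "x \<in> P" "y \<in> P" "x \<noteq> y"
  shows "card (setperp P L {x, y}) = 3"
proof (cases "collinear L x y")
  case True
  then obtain l where "l \<in> L" "x \<in> l" "y \<in> l" unfolding collinear_def by blast
  then show ?thesis using setperp_line_pair[of l x y] card_line[of l] assms(3) by simp
next
  case False
  then show ?thesis using card_setperp_noncollinear_pair assms by blast
qed

lemma setperp_pair_avoid:
  assumes "x \<in> P" "y \<in> P" "x \<noteq> y"
  obtains c where "c \<in> setperp P L {x, y}" "c \<noteq> u" "c \<noteq> v"
  using card_3_ex_avoid[OF card_setperp_pair[OF assms]] by blast

lemma setperp_pair_eq_if_subset:
  assumes "x \<in> P" "y \<in> P" "x \<noteq> y" "B \<subseteq> setperp P L {x, y}" "card B = 3"
  shows "setperp P L {x, y} = B"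
proof -
  have "finite (setperp P L {x, y})"
    by (rule card_ge_0_finite) (simp add: card_setperp_pair assms)
  from card_subset_eq[OF this assms(4)] show ?thesis
    using card_setperp_pair[OF assms(1-3)] assms(5) by simp
qed

lemma collinear_pair_common_neighbour:
  assumes "collinear L u v" "z \<in> P" "z \<notin> perp P L u" "z \<notin> perp P L v"
  obtains e where "collinear L u e" "collinear L v e" "collinear L z e"
proof -
  obtain l where l: "l \<in> L" "u \<in> l" "v \<in> l" "u \<noteq> v"
    using assms(1) unfolding collinear_def by blast
  have "z \<notin> l"
    using line_perp[OF l(1) l(2)] assms(3) by blast
  then obtain e where e: "e \<in> l" "collinear L z e"
    using exists_collinear_on_line[OF assms(2) l(1)] by blast
  have "u \<notin> perp P L z" "v \<notin> perp P L z"
    using assms(3,4) perp_sym by blast+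
  then have "e \<noteq> u" "e \<noteq> v"
    using collinear_imp_perp[OF e(2)] by blast+
  then show thesis
    using that line_collinear[OF l(1) l(2) e(1)] line_collinear[OF l(1) l(3) e(1)] e(2) by metis
qed

lemma collinear_pair_far_neighbour:
  assumes "collinear L x c" "z \<in> P" "z \<notin> perp P L x" "z \<notin> perp P L c"
    and A: "A \<subseteq> setperp P L {x, z}" "\<forall>a\<in>A. \<not> collinear L c a"
  obtains e where "collinear L x e" "collinear L c e" "collinear L z e" "e \<notin> A"
    "coclique L (insert e A)"
proof -
  obtain e where e: "collinear L x e" "collinear L c e" "collinear L z e"
    by (rule collinear_pair_common_neighbour[OF assms(1-4)])
  have "insert e A \<subseteq> setperp P L {x, z}"
    using A(1) collinear_imp_perp[OF e(1)] collinear_imp_perp[OF e(3)] by (simp add: mem_setperp_pair)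
  moreover have "x \<noteq> z" "\<not> collinear L x z"
    using assms(1,3) collinear_in_points perp_refl collinear_imp_perp by blast+
  ultimately have "coclique L (insert e A)"
    using pairwise_subset[OF coclique_setperp_noncollinear_pair] by blast
  then show thesis
    using that e A(2) by blast
qed

text \<open>Points of GQ(2,2) are regular: \<open>{a, b}\<^sup>\<perp> \<subseteq> c\<^sup>\<perp>\<close>. Otherwise \<open>z\<close> would be collinear
  with four pairwise noncollinear points \<open>a, b, e, e'\<close>, where \<open>e\<close> and \<open>e'\<close> are its neighbours on
  the lines \<open>xc\<close> and \<open>yc\<close>.\<close>

lemma regular_pair_far_point:
  assumes "x \<noteq> y" "\<not> collinear L x y"
    and abc: "setperp P L {x, y} = {a, b, c}" "a \<noteq> b" "a \<noteq> c" "b \<noteq> c"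
    and z: "z \<in> setperp P L {a, b}" and far_z: "z \<notin> perp P L x" "z \<notin> perp P L y"
  shows "z \<in> perp P L c"
proof (rule ccontr)
  assume zc: "z \<notin> perp P L c"
  have zP: "z \<in> P" using z by (simp add: mem_setperp)
  have abc_xy: "a \<in> setperp P L {x, y}" "b \<in> setperp P L {x, y}" "c \<in> setperp P L {x, y}"
    using abc(1) by auto
  have "coclique L {a, b, c}"
    using coclique_setperp_noncollinear_pair[OF assms(1,2)] abc(1) by simp
  then have ncol_ab: "\<not> collinear L a b" "\<forall>q\<in>{a, b}. \<not> collinear L c q"
    using abc(2-4) by (auto simp: pairwise_insert)
  have ab_z: "{a, b} \<subseteq> setperp P L {x, z}" "{a, b} \<subseteq> setperp P L {y, z}"
    using abc_xy(1,2) z perp_sym[of z a] perp_sym[of z b] by (auto simp: mem_setperp_pair)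
  note col_xy = setperp_noncollinear_pair_collinear[OF assms(1,2) abc_xy(3)]
  obtain e where e: "collinear L x e" "collinear L c e" "collinear L z e" "e \<notin> {a, b}"
    "coclique L {e, a, b}"
    by (rule collinear_pair_far_neighbour[OF col_xy(1) zP far_z(1) zc ab_z(1) ncol_ab(2)])
  obtain e' where e': "collinear L y e'" "collinear L c e'" "collinear L z e'" "e' \<notin> {a, b}"
    "coclique L {e', a, b}"
    by (rule collinear_pair_far_neighbour[OF col_xy(2) zP far_z(2) zc ab_z(2) ncol_ab(2)])
  have "e \<noteq> e'"
  proof
    assume "e = e'"
    then have "e \<in> setperp P L {x, y}"
      using collinear_imp_perp[OF e(1)] collinear_imp_perp[OF e'(1)] by (simp add: mem_setperp_pair)
    moreover have "e \<noteq> c" using e(2) unfolding collinear_def by blast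
    ultimately show False using e(4) abc(1) by auto
  qed
  moreover have "z \<noteq> c" "\<not> collinear L z c"
    using zc zP collinear_commute[of L z c] by (auto simp: mem_perp)
  moreover have "{e, e'} \<subseteq> setperp P L {z, c}"
    using collinear_imp_perp e(2,3) e'(2,3) by (simp add: mem_setperp_pair)
  ultimately have "coclique L {e, e'}"
    using pairwise_subset[OF coclique_setperp_noncollinear_pair] by blast
  then have "coclique L {a, b, e, e'}"
    using e(5) e'(5) unfolding pairwise_def by blast
  moreover have "{a, b, e, e'} \<subseteq> {q. collinear L z q}"
    using e(3) e'(3) setperp_noncollinear_pair_collinear[OF abc(2) ncol_ab(1) z]
      collinear_commute[of L a z] collinear_commute[of L b z] by simp
  ultimately have "card {a, b, e, e'} \<le> 3"
    using card_coclique_neighbours_le[OF zP] by blast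
  moreover have "card {a, b, e, e'} = 4"
    using abc(2) e(4) e'(4) \<open>e \<noteq> e'\<close> by auto
  ultimately show False by simp
qed

lemma regular_pair:
  assumes "x \<noteq> y" "\<not> collinear L x y"
    and abc: "setperp P L {x, y} = {a, b, c}" "a \<noteq> b" "a \<noteq> c" "b \<noteq> c"
    and z: "z \<in> setperp P L {a, b}"
  shows "z \<in> perp P L c"
proof -
  have abc_xy: "a \<in> setperp P L {x, y}" "b \<in> setperp P L {x, y}" "c \<in> setperp P L {x, y}"
    using abc(1) by auto
  have "\<not> collinear L a b"
    using pairwiseD[OF coclique_setperp_noncollinear_pair[OF assms(1,2)] abc_xy(1,2) abc(2)] .
  moreover have "{x, y, z} \<subseteq> setperp P L {a, b}"
    using abc_xy(1,2) z perp_sym[of a x] perp_sym[of b x] perp_sym[of a y] perp_sym[of b y]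
    by (auto simp: mem_setperp_pair)
  ultimately have "coclique L {x, y, z}"
    using pairwise_subset[OF coclique_setperp_noncollinear_pair[OF abc(2)]] by blast
  moreover have "x \<in> perp P L c" "y \<in> perp P L c"
    using abc_xy(3) perp_sym[of c x] perp_sym[of c y] by (simp_all add: mem_setperp_pair)
  ultimately show ?thesis
  proof (cases "z \<in> {x, y}")
    case False
    with \<open>coclique L {x, y, z}\<close> have "z \<notin> perp P L x" "z \<notin> perp P L y"
      by (auto simp: mem_perp pairwise_insert)
    then show ?thesis by (rule regular_pair_far_point[OF assms])
  qed auto
qed

lemma complete_triad_through_noncollinear_pair:
  assumes "x \<in> P" "y \<in> P" "x \<noteq> y" "\<not> collinear L x y"
  obtains z where "z \<in> P" "z \<noteq> x" "z \<noteq> y" "complete_triad P L {x, y, z}"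
    "setperp P L {x, y, z} = setperp P L {x, y}"
proof -
  obtain a b c where abc: "setperp P L {x, y} = {a, b, c}" "a \<noteq> b" "a \<noteq> c" "b \<noteq> c"
    using card_setperp_pair[OF assms(1-3)] unfolding card_3_iff by blast
  have abc_xy: "a \<in> setperp P L {x, y}" "b \<in> setperp P L {x, y}"
    using abc(1) by auto
  then have "a \<in> P" "b \<in> P" by (simp_all add: mem_setperp)
  then obtain z where z: "z \<in> setperp P L {a, b}" "z \<noteq> x" "z \<noteq> y"
    using abc(2) by (rule setperp_pair_avoid)
  have "z \<in> perp P L c"
    using regular_pair[OF assms(3,4) abc z(1)] .
  then have "setperp P L {x, y} \<subseteq> perp P L z"
    using z(1) abc(1) perp_sym[of z a] perp_sym[of z b] perp_sym[of z c]
    by (auto simp: mem_setperp_pair)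
  then have perp_xyz: "setperp P L {x, y, z} = setperp P L {x, y}"
    using setperp_antimono[of "{x, y}" "{x, y, z}" P L] by (auto simp: mem_setperp)
  have ncol_ab: "\<not> collinear L a b"
    using pairwiseD[OF coclique_setperp_noncollinear_pair[OF assms(3,4)] abc_xy abc(2)] .
  have "{x, y, z} \<subseteq> setperp P L {a, b}"
    using abc_xy z(1) perp_sym[of a x] perp_sym[of b x] perp_sym[of a y] perp_sym[of b y]
    by (auto simp: mem_setperp_pair)
  then have "coclique L {x, y, z}"
    using pairwise_subset[OF coclique_setperp_noncollinear_pair[OF abc(2) ncol_ab]] by blast
  moreover have "z \<in> P" using z(1) by (simp add: mem_setperp)
  moreover have "{x, y, z} \<subseteq> P" "card {x, y, z} = 3"
    using assms(1-3) z(2,3) \<open>z \<in> P\<close> by auto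
  ultimately have "complete_triad P L {x, y, z}"
    unfolding complete_triad_def triad_iff perp_xyz using card_setperp_pair[OF assms(1-3)] by blast
  then show thesis
    using that \<open>z \<in> P\<close> z(2,3) perp_xyz by blast
qed

lemma exists_line_or_complete_triad:
  assumes "x \<in> P" "y \<in> P" "x \<noteq> y"
  obtains z where "z \<in> P" "z \<noteq> x" "z \<noteq> y" "{x, y, z} \<in> L \<or> complete_triad P L {x, y, z}"
    "setperp P L {x, y, z} = setperp P L {x, y}"
proof (cases "collinear L x y")
  case True
  then obtain l where l: "l \<in> L" "x \<in> l" "y \<in> l" unfolding collinear_def by blast
  obtain z where z: "z \<in> l" "z \<noteq> x" "z \<noteq> y"
    using card_3_ex_avoid[OF card_line[OF l(1)]] by blast
  have "{x, y, z} \<subseteq> l" "card {x, y, z} = card l"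
    using l z assms(3) card_line[OF l(1)] by auto
  then have "l = {x, y, z}"
    using card_subset_eq[OF finite_line[OF l(1)]] by blast
  then show thesis
    using that[of z] z l line_subset setperp_line[OF l(1)] setperp_line_pair[OF l(1) l(2,3) assms(3)]
    by auto
next
  case False
  then show thesis
    using that complete_triad_through_noncollinear_pair[OF assms False] by blast
qed

lemma triad_setperp_collinear:
  assumes "triad P L T" "t \<in> T" "s \<in> setperp P L T"
  shows "collinear L t s"
proof -
  obtain t' where t': "t' \<in> T" "t' \<noteq> t"
    using assms(1) card_3_ex_avoid[of T t t] unfolding triad_def by blast
  have "s \<in> perp P L t" "s \<in> perp P L t'"
    using assms(2,3) t'(1) by (simp_all add: mem_setperp)
  moreover have "\<not> collinear L t' t"
    using assms(1,2) t' unfolding triad_def by blast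
  ultimately show ?thesis using t'(2) by (auto simp: mem_perp)
qed

text \<open>Otherwise \<open>s\<close> would be collinear with the four pairwise noncollinear points of
  \<open>insert p T\<close>.\<close>

lemma triad_meets_perp_of_setperp:
  assumes T: "triad P L T" and s: "s \<in> setperp P L T" and p: "p \<in> perp P L s"
  shows "\<exists>t\<in>T. p \<in> perp P L t"
proof (rule ccontr)
  assume far: "\<not> (\<exists>t\<in>T. p \<in> perp P L t)"
  have TP: "T \<subseteq> P" "card T = 3" "coclique L T"
    using T unfolding triad_iff by simp_all
  then have "finite T" "T \<noteq> {}" by (auto intro: card_ge_0_finite)
  then have "p \<noteq> s" using far s by (auto simp: mem_setperp)
  have "p \<notin> T" using far p perp_refl perp_in_points by blast
  have ncol_p: "\<not> collinear L p t" "\<not> collinear L t p" if "t \<in> T" for t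
    using far that collinear_imp_perp[of t p] collinear_commute[of L p t] by auto
  have "insert p T \<subseteq> {q. collinear L s q}"
    using triad_setperp_collinear[OF T _ s] collinear_commute[of L _ s] p \<open>p \<noteq> s\<close>
    by (auto simp: mem_perp)
  moreover have "coclique L (insert p T)"
    using TP(3) ncol_p by (auto simp: pairwise_insert)
  moreover have "s \<in> P" using s by (simp add: mem_setperp)
  ultimately have "card (insert p T) \<le> 3"
    using card_coclique_neighbours_le by blast
  then show False using \<open>p \<notin> T\<close> \<open>finite T\<close> TP(2) by simp
qed

lemma complete_triad_setperp_pair:
  assumes "complete_triad P L T" "t \<in> T" "t' \<in> T" "t \<noteq> t'"
  shows "setperp P L {t, t'} = setperp P L T"
proof -
  have "T \<subseteq> P" "card (setperp P L T) = 3"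
    using assms(1) unfolding complete_triad_def triad_iff by simp_all
  moreover have "setperp P L T \<subseteq> setperp P L {t, t'}"
    using assms(2,3) by (intro setperp_antimono) blast
  ultimately show ?thesis
    using setperp_pair_eq_if_subset assms(2-4) by blast
qed

text \<open>Otherwise the sets \<open>{p, t}\<^sup>\<perp>\<close>, \<open>t \<in> T\<close>, would be pairwise disjoint, giving nine points
  collinear with \<open>p\<close>; but \<open>p\<close> has only six neighbours.\<close>

lemma complete_triad_perp_cover:
  assumes ct: "complete_triad P L T" and pP: "p \<in> P"
  shows "\<exists>t\<in>T. p \<in> perp P L t"
proof (rule ccontr)
  assume far: "\<not> (\<exists>t\<in>T. p \<in> perp P L t)"
  have T: "triad P L T" "T \<subseteq> P" "card T = 3"
    using ct unfolding complete_triad_def triad_iff by simp_all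
  then have "finite T" by (intro card_ge_0_finite) simp
  define N where "N t = setperp P L {p, t}" for t
  have card_N: "card (N t) = 3" if "t \<in> T" for t
    unfolding N_def using card_setperp_pair pP T(2) that far perp_refl[OF pP] by blast
  then have finite_N: "finite (N t)" if "t \<in> T" for t
    using that by (intro card_ge_0_finite) simp
  have N_sub: "N t \<subseteq> {q. collinear L p q}" if "t \<in> T" for t
  proof
    fix q assume "q \<in> N t"
    then have "q \<in> perp P L p" "q \<noteq> p" using far that by (auto simp: N_def mem_setperp_pair)
    then show "q \<in> {q. collinear L p q}" by (simp add: mem_perp)
  qed
  have disjoint: "N t \<inter> N t' = {}" if "t \<in> T" "t' \<in> T" "t \<noteq> t'" for t t'
  proof (rule ccontr)
    assume "N t \<inter> N t' \<noteq> {}"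
    then obtain q where "q \<in> setperp P L {t, t'}" "q \<in> perp P L p"
      by (force simp: N_def mem_setperp_pair)
    then have "q \<in> setperp P L T" "p \<in> perp P L q"
      using complete_triad_setperp_pair[OF ct that] perp_sym[of q p] by simp_all
    then show False
      using triad_meets_perp_of_setperp[OF T(1)] far by blast
  qed
  have "card (\<Union>t\<in>T. N t) = (\<Sum>t\<in>T. card (N t))"
    using finite_N disjoint by (intro card_UN_disjoint[OF \<open>finite T\<close>]) blast+
  also have "\<dots> = 9" using card_N T(3) by simp
  finally have "card (\<Union>t\<in>T. N t) = 9" .
  moreover have "card (\<Union>t\<in>T. N t) \<le> 6"
    using card_mono[OF finite_card_collinear_le(1)[OF pP]] finite_card_collinear_le(2)[OF pP] N_sub
    by (meson UN_least order_trans)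
  ultimately show False by simp
qed

lemma complete_triad_setperp:
  assumes ct: "complete_triad P L T"
  shows "setperp P L (setperp P L T) = T" and "complete_triad P L (setperp P L T)"
proof -
  let ?B = "setperp P L T"
  have T: "triad P L T" "card ?B = 3" using ct unfolding complete_triad_def by simp_all
  then have TP: "T \<subseteq> P" "card T = 3" "coclique L T" unfolding triad_iff by simp_all
  obtain t t' where t: "t \<in> T" "t' \<in> T" "t \<noteq> t'"
    using TP(2) unfolding card_3_iff by blast
  have "\<not> collinear L t t'" using pairwiseD[OF TP(3) t] .
  then have "coclique L ?B"
    using noncollinear_common_neighbours[OF t(3)] triad_setperp_collinear[OF T(1)] t(1,2)
    unfolding pairwise_def by blast
  obtain s s' where s: "s \<in> ?B" "s' \<in> ?B" "s \<noteq> s'"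
    using T(2) unfolding card_3_iff by blast
  then have sP: "s \<in> P" "s' \<in> P" by (simp_all add: mem_setperp)
  have T_B: "T \<subseteq> setperp P L ?B"
    using TP(1) perp_sym by (auto simp: mem_setperp)
  have B_s: "setperp P L ?B \<subseteq> setperp P L {s, s'}"
    using s by (intro setperp_antimono) blast
  then have "setperp P L {s, s'} = T"
    using setperp_pair_eq_if_subset[OF sP s(3)] T_B TP(2) by blast
  then show B_B: "setperp P L ?B = T"
    using T_B B_s by blast
  have "?B \<subseteq> P" by (auto simp: mem_setperp)
  then show "complete_triad P L ?B"
    unfolding complete_triad_def triad_iff B_B using T(2) TP(2) \<open>coclique L ?B\<close> by blast
qed

lemma line_perp_cover:
  assumes "l \<in> L" "p \<in> P"
  shows "\<exists>t\<in>l. p \<in> perp P L t"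
proof (cases "p \<in> l")
  case True
  then show ?thesis using perp_refl[OF assms(2)] by blast
next
  case False
  then obtain t where "t \<in> l" "collinear L p t"
    using exists_collinear_on_line assms by blast
  then show ?thesis using collinear_imp_perp[of t p] collinear_commute[of L p t] by blast
qed

lemma line_or_complete_triad_perp_cover:
  assumes "T \<in> L \<or> complete_triad P L T" "p \<in> P"
  shows "\<exists>t\<in>T. p \<in> perp P L t" and "\<exists>s\<in>setperp P L T. p \<in> perp P L s"
proof -
  have "(\<exists>t\<in>T. p \<in> perp P L t) \<and> (\<exists>s\<in>setperp P L T. p \<in> perp P L s)"
  proof (cases "T \<in> L")
    case True
    then show ?thesis using line_perp_cover assms(2) setperp_line by simp
  next
    case False
    then have "complete_triad P L T" using assms(1) by blast
    then show ?thesis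
      using complete_triad_perp_cover complete_triad_setperp(2) assms(2) by blast
  qed
  then show "\<exists>t\<in>T. p \<in> perp P L t" "\<exists>s\<in>setperp P L T. p \<in> perp P L s" by simp_all
qed

section \<open>The collinearity graph of \<open>\<S>\<close>, read in one quadrangle\<close>

text \<open>Points and adjacency of \<open>\<S>\<close>, with the first coordinates moved into this quadrangle
  along the isomorphism; \<open>adj_if_pair_adj\<close> below is the inclusion that is used.\<close>

definition pair_adj :: "(('p \<times> 'p) \<times> ('p \<times> 'p)) set" where
  "pair_adj = {((A, \<alpha>), (C, \<gamma>)). \<alpha> \<in> perp P L A \<and> \<gamma> \<in> perp P L C \<and> A \<noteq> C \<and> \<alpha> \<noteq> \<gamma> \<and>
                 \<alpha> \<in> perp P L C \<and> \<gamma> \<in> perp P L A}"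

lemma mem_pair_adj:
  "((A, \<alpha>), (C, \<gamma>)) \<in> pair_adj \<longleftrightarrow> \<alpha> \<in> perp P L A \<and> \<gamma> \<in> perp P L C \<and> A \<noteq> C \<and> \<alpha> \<noteq> \<gamma> \<and>
     \<alpha> \<in> perp P L C \<and> \<gamma> \<in> perp P L A"
  unfolding pair_adj_def by simp

lemma pair_adj_setperp:
  assumes "s \<in> setperp P L T" "\<sigma> \<in> setperp P L T" "t \<in> T" "t' \<in> T" "t \<noteq> t'" "s \<noteq> \<sigma>"
  shows "((t, s), (t', \<sigma>)) \<in> pair_adj"
  using assms unfolding mem_pair_adj mem_setperp by blast

lemma pair_adj_near_same_point:
  assumes "\<alpha> \<in> perp P L A" "\<sigma> \<in> perp P L A"
  shows "\<exists>k\<le>2. ((A, \<alpha>), (A, \<sigma>)) \<in> pair_adj ^^ k"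
proof (cases "\<alpha> = \<sigma>")
  case True
  then show ?thesis by (intro exI[of _ 0]) simp
next
  case False
  have P: "A \<in> P" "\<alpha> \<in> P" "\<sigma> \<in> P" using assms perp_in_points by blast+
  obtain C where C: "C \<in> setperp P L {\<alpha>, \<sigma>}" "C \<noteq> A"
    using setperp_pair_avoid[OF P(2,3) False] by metis
  then have CP: "C \<in> P" "\<alpha> \<in> perp P L C" "\<sigma> \<in> perp P L C"
    using perp_sym[of C \<alpha>] perp_sym[of C \<sigma>] by (simp_all add: mem_setperp mem_setperp_pair)
  obtain \<gamma> where \<gamma>: "\<gamma> \<in> setperp P L {A, C}" "\<gamma> \<noteq> \<alpha>" "\<gamma> \<noteq> \<sigma>"
    using setperp_pair_avoid[OF P(1) CP(1) C(2)[symmetric]] by metis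
  then have "((A, \<alpha>), (C, \<gamma>)) \<in> pair_adj" "((C, \<gamma>), (A, \<sigma>)) \<in> pair_adj"
    using assms CP C(2) by (auto simp: mem_pair_adj mem_setperp_pair)
  then show ?thesis by (intro exI[of _ 2]) (simp add: relpow_2_I)
qed

lemma pair_adj_near_same_second:
  assumes "\<alpha> \<in> perp P L A" "\<alpha> \<in> perp P L X"
  shows "\<exists>k\<le>2. ((A, \<alpha>), (X, \<alpha>)) \<in> pair_adj ^^ k"
proof (cases "A = X")
  case True
  then show ?thesis by (intro exI[of _ 0]) simp
next
  case False
  have P: "A \<in> P" "X \<in> P" "\<alpha> \<in> P" using assms perp_in_points by blast+
  obtain \<gamma> where \<gamma>: "\<gamma> \<in> setperp P L {A, X}" "\<gamma> \<noteq> \<alpha>"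
    using setperp_pair_avoid[OF P(1,2) False] by metis
  then have \<gamma>P: "\<gamma> \<in> P" by (simp add: mem_setperp)
  have "A \<in> perp P L \<alpha>" "X \<in> perp P L \<alpha>" using assms perp_sym by blast+
  then obtain C where C: "C \<in> setperp P L {\<alpha>, \<gamma>}" "C \<noteq> A" "C \<noteq> X"
    using setperp_pair_avoid[OF P(3) \<gamma>P \<gamma>(2)[symmetric]] by metis
  then have "((A, \<alpha>), (C, \<gamma>)) \<in> pair_adj" "((C, \<gamma>), (X, \<alpha>)) \<in> pair_adj"
    using assms \<gamma> perp_sym[of C \<alpha>] perp_sym[of C \<gamma>]
    by (auto simp: mem_pair_adj mem_setperp_pair)
  then show ?thesis by (intro exI[of _ 2]) (simp add: relpow_2_I)
qed

lemma pair_adj_near_line: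
  assumes T: "{X, Y, Z} \<in> L \<or> complete_triad P L {X, Y, Z}"
    and B: "setperp P L {X, Y, Z} = {u, v, w}"
    and distinct: "X \<noteq> Y" "X \<noteq> Z" "Y \<noteq> Z" "u \<noteq> v" "u \<noteq> w" "v \<noteq> w"
    and \<alpha>: "\<alpha> \<in> perp P L A"
  shows "\<exists>Q\<in>{(X, u), (Y, v), (Z, w)}. \<exists>k\<le>2. ((A, \<alpha>), Q) \<in> pair_adj ^^ k"
proof -
  let ?Ln = "{(X, u), (Y, v), (Z, w)}"
  have on_line: "t \<in> {X, Y, Z}" "s \<in> setperp P L {X, Y, Z}" if "(t, s) \<in> ?Ln" for t s
    using that B by auto
  then have on_line_perp: "s \<in> perp P L t" if "(t, s) \<in> ?Ln" for t s
    using that unfolding mem_setperp by blast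
  consider "A \<in> {X, Y, Z}" | "\<alpha> \<in> {u, v, w}" | "A \<notin> {X, Y, Z}" "\<alpha> \<notin> {u, v, w}" by blast
  then show ?thesis
  proof cases
    case 1
    then obtain \<sigma> where \<sigma>: "(A, \<sigma>) \<in> ?Ln" by auto
    then show ?thesis using pair_adj_near_same_point[OF \<alpha> on_line_perp[OF \<sigma>]] by blast
  next
    case 2
    then obtain X' where X': "(X', \<alpha>) \<in> ?Ln" by auto
    then show ?thesis using pair_adj_near_same_second[OF \<alpha> on_line_perp[OF X']] by blast
  next
    case 3
    have AP: "A \<in> P" and \<alpha>P: "\<alpha> \<in> P" using \<alpha> perp_in_points by blast+
    obtain C where C: "C \<in> {X, Y, Z}" "\<alpha> \<in> perp P L C"
      using line_or_complete_triad_perp_cover(1)[OF T \<alpha>P] by blast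
    obtain \<gamma> where \<gamma>: "\<gamma> \<in> setperp P L {X, Y, Z}" "A \<in> perp P L \<gamma>"
      using line_or_complete_triad_perp_cover(2)[OF T AP] by blast
    have "\<gamma> \<in> {u, v, w}" using \<gamma>(1) B by simp
    moreover have "\<gamma> \<in> perp P L C" using \<gamma>(1) C(1) unfolding mem_setperp by blast
    ultimately have first: "((A, \<alpha>), (C, \<gamma>)) \<in> pair_adj"
      using 3 C \<alpha> perp_sym[OF \<gamma>(2)] by (auto simp: mem_pair_adj)
    have second: "((C, \<gamma>), (t, s)) \<in> pair_adj" if "(t, s) \<in> ?Ln" "C \<noteq> t" "\<gamma> \<noteq> s" for t s
      using pair_adj_setperp[OF \<gamma>(1) on_line(2)[OF that(1)] C(1) on_line(1)[OF that(1)] that(2,3)] .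
    have "(C \<noteq> X \<and> \<gamma> \<noteq> u) \<or> (C \<noteq> Y \<and> \<gamma> \<noteq> v) \<or> (C \<noteq> Z \<and> \<gamma> \<noteq> w)"
      using distinct by blast
    then obtain Q where "Q \<in> ?Ln" "((C, \<gamma>), Q) \<in> pair_adj"
      using second by blast
    moreover from this(2) have "((A, \<alpha>), Q) \<in> pair_adj ^^ 2"
      by (rule relpow_2_I[OF first])
    ultimately show ?thesis by (intro bexI[of _ Q] exI[of _ 2]) simp_all
  qed
qed

end

section \<open>Transfer along the isomorphism\<close>

lemma mem_SPts: "(x, u) \<in> SPts f P P' L' \<longleftrightarrow> x \<in> P \<and> u \<in> perp P' L' (f x)"
  unfolding SPts_def by simp

lemma SLinesI:
  assumes "x \<noteq> y" "x \<noteq> z" "y \<noteq> z" "{x, y, z} \<in> L \<or> complete_triad P L {x, y, z}"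
    "u \<noteq> v" "u \<noteq> w" "v \<noteq> w" "{u, v, w} = setperp P' L' (f ` {x, y, z})"
    "{(x, u), (y, v), (z, w)} \<subseteq> SPts f P P' L'"
  shows "{(x, u), (y, v), (z, w)} \<in> SLines f P L P' L'"
  unfolding SLines_def using assms by (intro CollectI exI conjI refl) simp_all

lemma SLinesE:
  assumes "Ln \<in> SLines f P L P' L'"
  obtains x y z u v w where "Ln = {(x, u), (y, v), (z, w)}" "x \<noteq> y" "x \<noteq> z" "y \<noteq> z"
    "{x, y, z} \<in> L \<or> complete_triad P L {x, y, z}" "u \<noteq> v" "u \<noteq> w" "v \<noteq> w"
    "{u, v, w} = setperp P' L' (f ` {x, y, z})" "{(x, u), (y, v), (z, w)} \<subseteq> SPts f P P' L'"
  using assms unfolding SLines_def mem_Collect_eq by (elim exE conjE) (rule that; assumption)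

lemma SLines_subset_SPts: "Ln \<in> SLines f P L P' L' \<Longrightarrow> Ln \<subseteq> SPts f P P' L'"
  by (erule SLinesE) simp

lemma adj_if_on_line:
  assumes "l \<in> Ls" "l \<subseteq> Ps" "a \<in> l" "b \<in> l" "a \<noteq> b"
  shows "(a, b) \<in> adj Ps Ls"
  using assms unfolding adj_def collinear_def by blast

locale gq22_iso = S: gq22 P L + S': gq22 P' L'
  for P :: "'a set" and L :: "'a set set" and P' :: "'b set" and L' :: "'b set set" +
  fixes f :: "'a \<Rightarrow> 'b"
  assumes iso: "geom_iso f P L P' L'"
begin

lemma inj_f: "inj_on f P" and image_points: "f ` P = P'" and image_lines: "(\<lambda>l. f ` l) ` L = L'"
  using iso unfolding geom_iso_def bij_betw_def by simp_all

lemma in_points_iso: "x \<in> P \<Longrightarrow> f x \<in> P'"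
  using image_points by blast

lemma eq_iso: "x \<in> P \<Longrightarrow> y \<in> P \<Longrightarrow> f x = f y \<longleftrightarrow> x = y"
  using inj_f by (meson inj_on_eq_iff)

lemma line_iso:
  assumes "T \<subseteq> P"
  shows "f ` T \<in> L' \<longleftrightarrow> T \<in> L"
proof
  assume "f ` T \<in> L'"
  then obtain l where l: "l \<in> L" "f ` T = f ` l" using image_lines by blast
  then have "l = T"
    using inj_on_image_eq_iff[OF inj_f S.line_subset[OF l(1)] assms] by simp
  then show "T \<in> L" using l(1) by simp
next
  assume "T \<in> L"
  then show "f ` T \<in> L'" using image_lines by blast
qed

lemma collinear_iso:
  assumes "x \<in> P" "y \<in> P"
  shows "collinear L' (f x) (f y) \<longleftrightarrow> collinear L x y"
proof -
  have "f x \<in> f ` l \<longleftrightarrow> x \<in> l" "f y \<in> f ` l \<longleftrightarrow> y \<in> l" if "l \<in> L" for l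
    using inj_on_image_mem_iff[OF inj_f] S.line_subset[OF that] assms by blast+
  then show ?thesis
    unfolding collinear_def image_lines[symmetric] using eq_iso[OF assms] by auto
qed

lemma perp_iso:
  assumes "x \<in> P" "y \<in> P"
  shows "f y \<in> perp P' L' (f x) \<longleftrightarrow> y \<in> perp P L x"
  using assms collinear_iso eq_iso in_points_iso by (simp add: mem_perp)

lemma setperp_iso:
  assumes "T \<subseteq> P"
  shows "setperp P' L' (f ` T) = f ` setperp P L T"
proof
  show "setperp P' L' (f ` T) \<subseteq> f ` setperp P L T"
  proof
    fix y assume y: "y \<in> setperp P' L' (f ` T)"
    then obtain q where q: "q \<in> P" "y = f q" using image_points by (auto simp: mem_setperp)
    then have "q \<in> setperp P L T"
      using y perp_iso assms by (auto simp: mem_setperp)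
    then show "y \<in> f ` setperp P L T" using q(2) by blast
  qed
  show "f ` setperp P L T \<subseteq> setperp P' L' (f ` T)"
    using perp_iso subsetD[OF assms] in_points_iso by (auto simp: mem_setperp)
qed

lemma card_iso: "T \<subseteq> P \<Longrightarrow> card (f ` T) = card T"
  using card_image inj_on_subset[OF inj_f] by blast

lemma coclique_iso:
  assumes "T \<subseteq> P"
  shows "coclique L' (f ` T) \<longleftrightarrow> coclique L T"
  unfolding pairwise_def using assms by (auto simp: collinear_iso eq_iso subset_iff)

lemma complete_triad_iso:
  assumes "T \<subseteq> P"
  shows "complete_triad P' L' (f ` T) \<longleftrightarrow> complete_triad P L T"
proof -
  have "setperp P L T \<subseteq> P" by (auto simp: mem_setperp)
  then show ?thesis
    unfolding complete_triad_def triad_iff setperp_iso[OF assms]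
    using assms card_iso coclique_iso image_points by auto
qed

lemma line_or_complete_triad_iso:
  assumes "T \<subseteq> P"
  shows "(f ` T \<in> L' \<or> complete_triad P' L' (f ` T)) \<longleftrightarrow> (T \<in> L \<or> complete_triad P L T)"
  using line_iso complete_triad_iso assms by simp

abbreviation SAdj :: "(('a \<times> 'b) \<times> ('a \<times> 'b)) set" where
  "SAdj \<equiv> adj (SPts f P P' L') (SLines f P L P' L')"

lemma adj_if_pair_adj:
  assumes a: "a \<in> P" and c: "c \<in> P" and edge: "((f a, \<alpha>), (f c, \<gamma>)) \<in> S'.pair_adj"
  shows "((a, \<alpha>), (c, \<gamma>)) \<in> SAdj"
proof -
  have \<alpha>: "\<alpha> \<in> perp P' L' (f a)" "\<alpha> \<in> perp P' L' (f c)"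
    and \<gamma>: "\<gamma> \<in> perp P' L' (f c)" "\<gamma> \<in> perp P' L' (f a)"
    and ne: "f a \<noteq> f c" "\<alpha> \<noteq> \<gamma>"
    using edge by (simp_all add: S'.mem_pair_adj)
  have fP: "f a \<in> P'" "f c \<in> P'" using a c in_points_iso by blast+
  obtain E where E: "E \<in> P'" "E \<noteq> f a" "E \<noteq> f c"
    "{f a, f c, E} \<in> L' \<or> complete_triad P' L' {f a, f c, E}"
    "setperp P' L' {f a, f c, E} = setperp P' L' {f a, f c}"
    by (rule S'.exists_line_or_complete_triad[OF fP ne(1)])
  obtain e where e: "e \<in> P" "f e = E" using E(1) image_points by blast
  obtain \<delta> where \<delta>: "\<delta> \<in> setperp P' L' {f a, f c}" "\<delta> \<noteq> \<alpha>" "\<delta> \<noteq> \<gamma>"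
    by (rule S'.setperp_pair_avoid[OF fP ne(1)])
  have "{\<alpha>, \<gamma>, \<delta>} \<subseteq> setperp P' L' {f a, f c}" "card {\<alpha>, \<gamma>, \<delta>} = 3"
    using \<alpha> \<gamma> \<delta> ne(2) by (auto simp: mem_setperp_pair)
  from S'.setperp_pair_eq_if_subset[OF fP ne(1) this]
  have perp_ace: "{\<alpha>, \<gamma>, \<delta>} = setperp P' L' (f ` {a, c, e})"
    using E(5) e(2) by simp
  have "{a, c, e} \<in> L \<or> complete_triad P L {a, c, e}"
    using line_or_complete_triad_iso[of "{a, c, e}"] E(4) e a c by simp
  moreover have "\<delta> \<in> perp P' L' (f e)"
    using perp_ace e(2) by (auto simp: mem_setperp)
  ultimately have "{(a, \<alpha>), (c, \<gamma>), (e, \<delta>)} \<in> SLines f P L P' L'"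
    using a c e(1) ne E(2,3) e(2) \<alpha>(1) \<gamma>(1) \<delta>(2,3) perp_ace
    by (intro SLinesI) (auto simp: mem_SPts)
  then show ?thesis
    by (rule adj_if_on_line) (use a c e(1) ne \<alpha>(1) \<gamma>(1) \<open>\<delta> \<in> perp P' L' (f e)\<close> in \<open>auto simp: mem_SPts\<close>)
qed

lemma relpow_adj_if_pair_adj:
  assumes "a \<in> P" "x \<in> P" "((f a, \<alpha>), (f x, u)) \<in> S'.pair_adj ^^ k"
  shows "((a, \<alpha>), (x, u)) \<in> SAdj ^^ k"
proof -
  define g :: "'b \<times> 'b \<Rightarrow> 'a \<times> 'b" where "g = (\<lambda>(A, \<alpha>). (inv_into P f A, \<alpha>))"
  have edge: "(g Q, g R) \<in> SAdj" if "(Q, R) \<in> S'.pair_adj" for Q R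
  proof -
    obtain A \<alpha> C \<gamma> where QR: "Q = (A, \<alpha>)" "R = (C, \<gamma>)" by (cases Q, cases R)
    then have "A \<in> P'" "C \<in> P'"
      using that S'.perp_in_points by (auto simp: S'.mem_pair_adj)
    then have "inv_into P f A \<in> P" "inv_into P f C \<in> P"
      "f (inv_into P f A) = A" "f (inv_into P f C) = C"
      using image_points inv_into_into[of _ f P] f_inv_into_f[of _ f P] by auto
    then show ?thesis
      using adj_if_pair_adj[of "inv_into P f A" "inv_into P f C" \<alpha> \<gamma>] that QR g_def by simp
  qed
  from relpow_image[where g = g, OF edge assms(3)] show ?thesis
    using inv_into_f_f[OF inj_f] assms(1,2) g_def by simp
qed

lemma SLines_near:
  assumes Ln: "Ln \<in> SLines f P L P' L'" and \<theta>: "\<theta> \<in> SPts f P P' L'"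
  shows "\<exists>Q\<in>Ln. \<exists>k\<le>2. (\<theta>, Q) \<in> SAdj ^^ k"
proof -
  obtain a \<alpha> where \<theta>_eq: "\<theta> = (a, \<alpha>)" by (cases \<theta>)
  have a: "a \<in> P" "\<alpha> \<in> perp P' L' (f a)" using \<theta> \<theta>_eq by (simp_all add: mem_SPts)
  obtain x y z u v w where Ln_eq: "Ln = {(x, u), (y, v), (z, w)}"
    and xyz: "x \<noteq> y" "x \<noteq> z" "y \<noteq> z" and T: "{x, y, z} \<in> L \<or> complete_triad P L {x, y, z}"
    and uvw: "u \<noteq> v" "u \<noteq> w" "v \<noteq> w" and B: "{u, v, w} = setperp P' L' (f ` {x, y, z})"
    and sub: "{(x, u), (y, v), (z, w)} \<subseteq> SPts f P P' L'"
    by (rule SLinesE[OF Ln])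
  have xyzP: "x \<in> P" "y \<in> P" "z \<in> P" using sub by (simp_all add: mem_SPts)
  then have fne: "f x \<noteq> f y" "f x \<noteq> f z" "f y \<noteq> f z" using xyz eq_iso by blast+
  have T': "{f x, f y, f z} \<in> L' \<or> complete_triad P' L' {f x, f y, f z}"
    using line_or_complete_triad_iso[of "{x, y, z}"] xyzP T by simp
  have B': "setperp P' L' {f x, f y, f z} = {u, v, w}"
    using B by simp
  have "\<exists>Q'\<in>{(f x, u), (f y, v), (f z, w)}. \<exists>k\<le>2. ((f a, \<alpha>), Q') \<in> S'.pair_adj ^^ k"
    by (rule S'.pair_adj_near_line[OF T' B' fne uvw a(2)])
  moreover have "\<exists>k\<le>2. ((a, \<alpha>), (t, s)) \<in> SAdj ^^ k"
    if "t \<in> P" "\<exists>k\<le>2. ((f a, \<alpha>), (f t, s)) \<in> S'.pair_adj ^^ k" for t s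
    using that relpow_adj_if_pair_adj[OF a(1) that(1)] by blast
  ultimately show ?thesis
    using xyzP Ln_eq \<theta>_eq by auto
qed

end

theorem proposition3p6:
  fixes P :: "'a set" and L :: "'a set set" and P' :: "'b set" and L' :: "'b set set"
    and f :: "'a \<Rightarrow> 'b"
    and Ln :: "('a \<times> 'b) set" and \<theta> p q r :: "'a \<times> 'b"
  assumes "GQ22 P L" and "GQ22 P' L'" and "geom_iso f P L P' L'"
    and "Ln \<in> SLines f P L P' L'" and "\<theta> \<in> SPts f P P' L'"
    and "Ln = {p, q, r}" and "p \<noteq> q" and "p \<noteq> r" and "q \<noteq> r"
    and "has_dist (adj (SPts f P P' L') (SLines f P L P' L')) \<theta> p 3"
    and "has_dist (adj (SPts f P P' L') (SLines f P L P' L')) \<theta> q 3"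
  shows "has_dist (adj (SPts f P P' L') (SLines f P L P' L')) \<theta> r 2"
proof -
  interpret gq22_iso P L P' L' f
    using assms(1-3) by (intro gq22_iso.intro gq22_iso_axioms.intro gq22.intro)
  obtain Q k where Q: "Q \<in> Ln" "k \<le> 2" "(\<theta>, Q) \<in> SAdj ^^ k"
    using SLines_near[OF assms(4,5)] by blast
  have "k < 3" using Q(2) by simp
  then have "Q \<noteq> p" "Q \<noteq> q"
    using Q(3) assms(10,11) unfolding has_dist_def by blast+
  then have "(\<theta>, r) \<in> SAdj ^^ k" using Q(1,3) assms(6) by blast
  moreover have "(r, p) \<in> SAdj"
    using adj_if_on_line[OF assms(4) SLines_subset_SPts[OF assms(4)]] assms(6,8) by simp
  moreover have "has_dist SAdj \<theta> p (Suc 2)"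
    using assms(10) by simp
  ultimately show ?thesis
    by (rule has_dist_of_neighbour[OF _ Q(2)])
qed

end
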